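(* Let $\mathsf{Obs}$ be an observation function over $\Sigma$ and $\Omega$ a distribution of $\Sigma$ with $\Omega\models\mathsf{Obs}$. Let $\Sigma_i\in\Omega$ and let $\sigma\in\Sigma^\star$ be such that $\sigma|_{\Sigma_i}\notin\mathsf{Dom}(\mathsf{Obs}_{\Sigma_i})$ and, for every $\Sigma_j\in\Omega\setminus\{\Sigma_i\}$, $\sigma|_{\Sigma_j}\in\mathsf{Dom}(\mathsf{Obs}_{\Sigma_j})$ and $\mathsf{Obs}_{\Sigma_j}(\sigma|_{\Sigma_j})=+$. Then for each $b\in\{+,-\}$, $\Omega\models\mathsf{Obs}\cup\{(\sigma,b)\}$.
   Context: $\sigma|_{\Sigma'}$ denotes projection of a word onto $\Sigma'$ (subsequence of symbols in $\Sigma'$), lifted elementwise to sets. A distribution of $\Sigma$ is a finite set $\Omega=\{\Sigma_1,\dots,\Sigma_n\}$ of subsets of $\Sigma$ with union $\Sigma$. An observation function over $\Sigma$ is a partial function $\mathsf{Obs}:\Sigma^\star\rightharpoonup\{+,-\}$ with finite domain; it is identified with the set of pairs $\{(\sigma,\mathsf{Obs}(\sigma))\}$, so $\mathsf{Obs}\cup\{(\sigma,b)\}$ (for $\sigma\notin\mathsf{Dom}(\mathsf{Obs})$) is the extension mapping $\sigma$ to $b$. $\mathcal L\models\mathsf{Obs}$ means: for all $\sigma\in\mathsf{Dom}(\mathsf{Obs})$, $\sigma\in\mathcal L\iff\mathsf{Obs}(\sigma)=+$. $\mathcal L$ is a product language over $\Omega$ if $\mathcal L=\{w\mid\forall i.\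 w|_{\Sigma_i}\in\mathcal L_i\}$ for some $\mathcal L_i\subseteq\Sigma_i^\star$. $\Omega\models\mathsf{Obs}$ means there is a product language $\mathcal L$ over $\Omega$ with $\mathcal L\models\mathsf{Obs}$. For $\Sigma'\subseteq\Sigma$, the local observation function $\mathsf{Obs}_{\Sigma'}$ has domain $\mathsf{Dom}(\mathsf{Obs})|_{\Sigma'}$, and $\mathsf{Obs}_{\Sigma'}(\sigma')=+$ iff some $\sigma\in\mathsf{Dom}(\mathsf{Obs})$ has $\sigma|_{\Sigma'}=\sigma'$ and $\mathsf{Obs}(\sigma)=+$, else $-$. *)

theory Defs
  imports Main
begin

text \<open>Words over an alphabet are lists; + is represented by True, - by False.\<close>

definition proj :: "'a set \<Rightarrow> 'a list \<Rightarrow> 'a list" where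
  "proj S w = filter (\<lambda>x. x \<in> S) w"

definition distribution :: "'a set \<Rightarrow> 'a set set \<Rightarrow> bool" where
  "distribution \<Sigma> \<Omega> \<longleftrightarrow> finite \<Omega> \<and> (\<forall>S\<in>\<Omega>. S \<subseteq> \<Sigma>) \<and> \<Union>\<Omega> = \<Sigma>"

definition observation :: "'a set \<Rightarrow> ('a list \<rightharpoonup> bool) \<Rightarrow> bool" where
  "observation \<Sigma> Obs \<longleftrightarrow> finite (dom Obs) \<and> dom Obs \<subseteq> lists \<Sigma>"

definition lang_models :: "'a list set \<Rightarrow> ('a list \<rightharpoonup> bool) \<Rightarrow> bool" where
  "lang_models L Obs \<longleftrightarrow> (\<forall>w\<in>dom Obs. (w \<in> L \<longleftrightarrow> Obs w = Some True))"

definition product_language :: "'a set \<Rightarrow> 'a set set \<Rightarrow> 'a list set \<Rightarrow> bool" where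
  "product_language \<Sigma> \<Omega> L \<longleftrightarrow>
     (\<exists>Ls :: 'a set \<Rightarrow> 'a list set. (\<forall>S\<in>\<Omega>. Ls S \<subseteq> lists S) \<and>
        L = {w \<in> lists \<Sigma>. \<forall>S\<in>\<Omega>. proj S w \<in> Ls S})"

definition dist_models :: "'a set \<Rightarrow> 'a set set \<Rightarrow> ('a list \<rightharpoonup> bool) \<Rightarrow> bool" where
  "dist_models \<Sigma> \<Omega> Obs \<longleftrightarrow> (\<exists>L. product_language \<Sigma> \<Omega> L \<and> lang_models L Obs)"

definition local_obs :: "('a list \<rightharpoonup> bool) \<Rightarrow> 'a set \<Rightarrow> ('a list \<rightharpoonup> bool)" where
  "local_obs Obs S w' =
     (if w' \<in> proj S ` dom Obs
      then Some (\<exists>w\<in>dom Obs. proj S w = w' \<and> Obs w = Some True)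
      else None)"

end

theory Submission
  imports Defs
begin

text \<open>Take a product language \<open>L\<close> witnessing \<open>\<Omega> \<models> Obs\<close> and change only its \<open>Si\<close>-component at
  the single word \<open>\<sigma>|\<^bsub>Si\<^esub>\<close>, adding it for \<open>b = +\<close> and removing it for \<open>b = -\<close>. No observed word
  projects onto \<open>\<sigma>|\<^bsub>Si\<^esub>\<close>, so the observations are still respected. Every other projection
  \<open>\<sigma>|\<^bsub>Sj\<^esub>\<close> is the projection of a positively observed word, which lies in \<open>L\<close>, so it belongs
  to the \<open>Sj\<close>-component; hence \<open>\<sigma>\<close> lies in the new language exactly when \<open>b = +\<close>.\<close>

definition product_lang :: "'a set \<Rightarrow> 'a set set \<Rightarrow> ('a set \<Rightarrow> 'a list set) \<Rightarrow> 'a list set" where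
  "product_lang \<Sigma> \<Omega> Ls = {w \<in> lists \<Sigma>. \<forall>S\<in>\<Omega>. proj S w \<in> Ls S}"

lemma product_language_iff:
  "product_language \<Sigma> \<Omega> L \<longleftrightarrow> (\<exists>Ls. (\<forall>S\<in>\<Omega>. Ls S \<subseteq> lists S) \<and> L = product_lang \<Sigma> \<Omega> Ls)"
  unfolding product_language_def product_lang_def ..

lemma proj_in_lists: "proj S w \<in> lists S"
  unfolding proj_def by auto

lemma dom_local_obs: "dom (local_obs Obs S) = proj S ` dom Obs"
  unfolding local_obs_def dom_def by auto

lemma local_obs_eq_Some_True_iff:
  "local_obs Obs S v = Some True \<longleftrightarrow> (\<exists>w\<in>dom Obs. proj S w = v \<and> Obs w = Some True)"
  unfolding local_obs_def by auto

lemma lang_models_map_upd_iff: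
  "lang_models L (Obs(\<sigma> \<mapsto> b)) \<longleftrightarrow> lang_models L (Obs(\<sigma> := None)) \<and> (\<sigma> \<in> L \<longleftrightarrow> b)"
  unfolding lang_models_def by auto

lemma lang_models_cong:
  assumes "lang_models L Obs" and "\<And>w. w \<in> dom Obs \<Longrightarrow> w \<in> L' \<longleftrightarrow> w \<in> L"
  shows "lang_models L' Obs"
  using assms unfolding lang_models_def by auto

lemma in_component_if_local_obs_positive:
  assumes "lang_models (product_lang \<Sigma> \<Omega> Ls) Obs" and "S \<in> \<Omega>"
    and "local_obs Obs S v = Some True"
  shows "v \<in> Ls S"
proof -
  obtain w where "w \<in> dom Obs" "proj S w = v" "Obs w = Some True"
    using assms(3) by (auto simp: local_obs_eq_Some_True_iff)
  with assms(1,2) show ?thesis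
    unfolding lang_models_def product_lang_def by auto
qed

lemma product_lang_upd_iff_away:
  assumes "A - {p} = Ls Si - {p}" and "proj Si w \<noteq> p"
  shows "w \<in> product_lang \<Sigma> \<Omega> (Ls(Si := A)) \<longleftrightarrow> w \<in> product_lang \<Sigma> \<Omega> Ls"
  using assms unfolding product_lang_def by auto

lemma product_lang_upd_iff_at:
  assumes "w \<in> lists \<Sigma>" and "Si \<in> \<Omega>" and "\<forall>S\<in>\<Omega> - {Si}. proj S w \<in> Ls S"
  shows "w \<in> product_lang \<Sigma> \<Omega> (Ls(Si := A)) \<longleftrightarrow> proj Si w \<in> A"
  using assms unfolding product_lang_def by auto

theorem mainTheorem6:
  fixes \<Sigma> :: "'a set" and \<Omega> :: "'a set set" and Obs :: "'a list \<rightharpoonup> bool"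
    and Si :: "'a set" and \<sigma> :: "'a list" and b :: bool
  assumes "observation \<Sigma> Obs"
    and "distribution \<Sigma> \<Omega>"
    and "dist_models \<Sigma> \<Omega> Obs"
    and "Si \<in> \<Omega>"
    and "\<sigma> \<in> lists \<Sigma>"
    and "proj Si \<sigma> \<notin> dom (local_obs Obs Si)"
    and "\<forall>Sj\<in>\<Omega> - {Si}. local_obs Obs Sj (proj Sj \<sigma>) = Some True"
  shows "dist_models \<Sigma> \<Omega> (Obs(\<sigma> \<mapsto> b))"
proof -
  obtain Ls where Ls: "\<forall>S\<in>\<Omega>. Ls S \<subseteq> lists S"
    and models: "lang_models (product_lang \<Sigma> \<Omega> Ls) Obs"
    using assms(3) unfolding dist_models_def product_language_iff by blast
  define p where "p = proj Si \<sigma>"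
  define A where "A = (if b then insert p (Ls Si) else Ls Si - {p})"
  define L' where "L' = product_lang \<Sigma> \<Omega> (Ls(Si := A))"
  have unobserved: "proj Si w \<noteq> p" if "w \<in> dom Obs" for w
    using assms(6) that unfolding p_def dom_local_obs by (metis image_eqI)
  have agree: "A - {p} = Ls Si - {p}" and "A \<subseteq> lists Si"
    using Ls assms(4) proj_in_lists[of Si \<sigma>] by (auto simp: A_def p_def)
  then have "product_language \<Sigma> \<Omega> L'"
    using Ls unfolding product_language_iff L'_def by (intro exI[of _ "Ls(Si := A)"]) auto
  moreover have "lang_models L' Obs"
    unfolding L'_def using models
    by (rule lang_models_cong) (rule product_lang_upd_iff_away[where Ls = Ls, OF agree unobserved])
  moreover have "\<sigma> \<in> L' \<longleftrightarrow> b"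
    using assms(4,5,7) in_component_if_local_obs_positive[OF models]
    by (auto simp: L'_def product_lang_upd_iff_at A_def p_def)
  moreover have "Obs(\<sigma> := None) = Obs"
    using unobserved[of \<sigma>] unfolding p_def by (metis domIff fun_upd_idem)
  ultimately show ?thesis
    unfolding dist_models_def lang_models_map_upd_iff by auto
qed

end
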